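(* Let $\Lambda$ be quasi-lacunary. There exist $A>0$ and $\eta>0$ such that for every $k\geqslant0$ and every $f\in F_k$ satisfying $A\frac{\|f\|_\infty}{\|f'\|_\infty}\leqslant\eta$, every point $x_0\in[0,1]$ with $|f(x_0)|=\|f\|_\infty$ satisfies \[1-A\frac{\|f\|_\infty}{\|f'\|_\infty}\leqslant x_0\leqslant1.\]
   Context: $\Lambda=(\lambda_k)_{k\geqslant0}$ is an increasing sequence of positive reals with $\sum_k1/\lambda_k<\infty$. $\Lambda$ is quasi-lacunary with parameters $q>1$, $N\geqslant1$ if $\Lambda$ is partitioned into consecutive disjoint blocks $E_k=\{\lambda_j: n_k\leqslant j<n_{k+1}\}$ ($0=n_0<n_1<\dots$) with $\#E_k\leqslant N$ and $q\leqslant\lambda_{n_{k+1}}/\lambda_{n_k}\leqslant q^{2N}$. $F_k=\operatorname{Span}\{t^\lambda:\lambda\in E_k\}$ as functions on $[0,1]$; $\|\cdot\|_\infty$ is the sup norm on $[0,1]$. *)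

theory Defs
  imports "HOL-Analysis.Analysis"
begin

definition muntz_seq :: "(nat \<Rightarrow> real) \<Rightarrow> bool" where
  "muntz_seq lam \<longleftrightarrow> strict_mono lam \<and> (\<forall>k. 0 < lam k) \<and> summable (\<lambda>k. 1 / lam k)"

text \<open>Quasi-lacunarity with parameters q, N and block boundaries n:
  the k-th block is E_k = {lam j : n k \<le> j < n (k+1)}.\<close>
definition quasi_lacunary ::
  "(nat \<Rightarrow> real) \<Rightarrow> real \<Rightarrow> nat \<Rightarrow> (nat \<Rightarrow> nat) \<Rightarrow> bool" where
  "quasi_lacunary lam q N n \<longleftrightarrow>
     q > 1 \<and> N \<ge> 1 \<and> n 0 = 0 \<and> strict_mono n \<and>
     (\<forall>k. n (Suc k) - n k \<le> N) \<and>
     (\<forall>k. q \<le> lam (n (Suc k)) / lam (n k) \<and> lam (n (Suc k)) / lam (n k) \<le> q ^ (2 * N))"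

text \<open>The element of F_k with coefficients c: t \<mapsto> sum of c j * t^(lam j) over the block.\<close>
definition block_fun :: "(nat \<Rightarrow> real) \<Rightarrow> (nat \<Rightarrow> nat) \<Rightarrow> nat \<Rightarrow> (nat \<Rightarrow> real) \<Rightarrow> real \<Rightarrow> real" where
  "block_fun lam n k c = (\<lambda>t. \<Sum>j\<in>{n k..<n (Suc k)}. c j * t powr lam j)"

definition sup_norm01 :: "(real \<Rightarrow> real) \<Rightarrow> real" where
  "sup_norm01 g = (SUP t\<in>{0..1}. \<bar>g t\<bar>)"

end

(*
  Let f be in F_k and Lambda = lam (n k) the smallest exponent of its block.  The substitution
  t = exp (- u / Lambda) turns f into a sum of at most N exponentials exp (- mu u) with
  frequencies mu in [1, q^(2N)].  A Bernstein-type inequality for such sums, applied to the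
  differential operators prod_l (d/du + mu_l) in a descending induction, shows that a sum bounded
  by the sup norm M of f on [0, oo) decays like M exp (- u / 2), and so does its derivative, with
  constants depending only on q and N.  Back in the variable t this gives |f t| <= K M t^(Lambda/2),
  so a maximum point x0 satisfies 1 - x0 <= A / Lambda, and, for Lambda >= 2, the Bernstein
  inequality |f'| <= K Lambda M, i.e. 1 / Lambda <= K M / |f'|.  The finitely many blocks with
  Lambda < 2 span finite-dimensional spaces on which |f'| <= C M; taking eta < A / C, the
  hypothesis A M / |f'| <= eta excludes them.
*)

theory Submission
  imports Defs
begin

section \<open>Sums of exponentials\<close>

definition exp_sum :: "(nat \<Rightarrow> real) \<Rightarrow> (nat \<Rightarrow> real) \<Rightarrow> nat \<Rightarrow> real \<Rightarrow> real" where
  "exp_sum c \<mu> m u = (\<Sum>j<m. c j * exp (- \<mu> j * u))"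

lemma exp_sum_Suc: "exp_sum c \<mu> (Suc m) u = exp_sum c \<mu> m u + c m * exp (- \<mu> m * u)"
  by (simp add: exp_sum_def)

lemma has_real_derivative_exp_sum:
  "(exp_sum c \<mu> m has_real_derivative exp_sum (\<lambda>j. - c j * \<mu> j) \<mu> m u) (at u)"
  unfolding exp_sum_def by (auto intro!: derivative_eq_intros sum.cong simp: algebra_simps)

lemma continuous_on_exp_sum: "continuous_on S (exp_sum c \<mu> m)"
  using has_real_derivative_exp_sum by (meson DERIV_continuous continuous_at_imp_continuous_on)

lemma exp_sum_shift_frequencies:
  "exp (\<nu> * (u - a)) * exp_sum c \<mu> m u = exp_sum (\<lambda>j. c j * exp (- \<nu> * a)) (\<lambda>j. \<mu> j - \<nu>) m u"
  unfolding exp_sum_def sum_distrib_left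
  by (rule sum.cong) (auto simp: algebra_simps simp flip: exp_add)

lemma lipschitz_of_deriv_bound:
  fixes f f' :: "real \<Rightarrow> real"
  assumes "\<And>z. z \<in> {x..y} \<Longrightarrow> (f has_real_derivative f' z) (at z)"
    and "\<And>z. z \<in> {x..y} \<Longrightarrow> \<bar>f' z\<bar> \<le> K"
    and "v \<in> {x..y}" "w \<in> {x..y}"
  shows "\<bar>f v - f w\<bar> \<le> K * \<bar>v - w\<bar>"
  using field_differentiable_bound[of "{x..y}" f f' K v w] assms
  by (auto intro: has_field_derivative_at_within)

text \<open>If \<open>W' = V\<close> and \<open>V\<close> varies slowly compared to its size at \<open>v\<close>, then \<open>V\<close> keeps
  half of its size on a whole interval of length \<open>l\<close> around \<open>v\<close>, so that the mean value
  theorem bounds \<open>l \<bar>V v\<bar>\<close> by the oscillation of \<open>W\<close>.\<close>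
lemma slowly_varying_deriv_bound:
  fixes W V V' :: "real \<Rightarrow> real"
  assumes W': "\<And>u. (W has_real_derivative V u) (at u)"
    and V': "\<And>u. (V has_real_derivative V' u) (at u)"
    and l: "0 < l" "l \<le> L" "C * l \<le> 1/2" and C: "0 \<le> C"
    and W_bound: "\<And>u. u \<in> {a..a+L} \<Longrightarrow> \<bar>W u\<bar> \<le> \<beta>"
    and V'_bound: "\<And>u. u \<in> {a..a+L} \<Longrightarrow> \<bar>V' u\<bar> \<le> C * \<bar>V v\<bar>"
    and v: "v \<in> {a..a+L}"
  shows "l * \<bar>V v\<bar> \<le> 4 * \<beta>"
proof -
  obtain x where x: "a \<le> x" "x + l \<le> a + L" "v \<in> {x..x+l}"
  proof (cases "v + l \<le> a + L")
    case True then show ?thesis using that[of v] v l by auto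
  next
    case False then show ?thesis using that[of "a + L - l"] v l by auto
  qed
  have sub: "{x..x+l} \<subseteq> {a..a+L}" using x by auto
  obtain z where z: "x < z" "z < x + l" "W (x + l) - W x = l * V z"
    using MVT2[of x "x + l" W V] W' l by auto
  have "\<bar>V z - V v\<bar> \<le> (C * \<bar>V v\<bar>) * \<bar>z - v\<bar>"
    by (rule lipschitz_of_deriv_bound[of x "x+l" V V']) (use V' V'_bound sub x z in auto)
  also have "\<dots> \<le> (C * \<bar>V v\<bar>) * l"
    using x z C by (intro mult_left_mono) auto
  also have "\<dots> \<le> \<bar>V v\<bar> / 2"
    using mult_left_mono[OF l(3), of "\<bar>V v\<bar>"] by (simp add: algebra_simps)
  finally have "\<bar>V v\<bar> / 2 \<le> \<bar>V z\<bar>" by linarith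
  then have "l * (\<bar>V v\<bar> / 2) \<le> l * \<bar>V z\<bar>"
    using l by (intro mult_left_mono) auto
  also have "\<dots> = \<bar>W (x + l) - W x\<bar>"
    using z l by (simp add: abs_mult)
  also have "\<dots> \<le> \<bar>W (x + l)\<bar> + \<bar>W x\<bar>"
    by simp
  also have "\<dots> \<le> 2 * \<beta>"
    using W_bound[of x] W_bound[of "x + l"] sub l by auto
  finally show ?thesis by simp
qed

lemma exp_sum_deriv_eq_shifted:
  "exp_sum (\<lambda>j. - c j * \<mu> j) \<mu> (Suc m) u = - \<mu> m * exp_sum c \<mu> (Suc m) u
     + exp (- \<mu> m * (u - a)) * exp_sum (\<lambda>j. - (c j * exp (- \<mu> m * a)) * (\<mu> j - \<mu> m)) (\<lambda>j. \<mu> j - \<mu> m) m u"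
proof -
  have "exp (- \<mu> m * (u - a)) * exp_sum (\<lambda>j. - (c j * exp (- \<mu> m * a)) * (\<mu> j - \<mu> m)) (\<lambda>j. \<mu> j - \<mu> m) m u
      = (\<Sum>j<m. c j * (\<mu> m - \<mu> j) * exp (- \<mu> j * u))"
    unfolding exp_sum_def sum_distrib_left
    by (rule sum.cong) (auto simp: algebra_simps simp flip: exp_add)
  also have "\<dots> = \<mu> m * (\<Sum>j<m. c j * exp (- \<mu> j * u)) - (\<Sum>j<m. c j * \<mu> j * exp (- \<mu> j * u))"
    by (simp add: sum_distrib_left sum_subtractf[symmetric] algebra_simps)
  finally show ?thesis
    by (simp add: exp_sum_def sum_negf algebra_simps)
qed

text \<open>Multiplying by \<open>exp (\<nu> u)\<close>, \<open>\<nu>\<close> the last frequency, makes the last term constant,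
  so the derivative \<open>V\<close> of the product is a sum of one exponential fewer, controlled by
  \<open>IH\<close> and hence, via \<open>slowly_varying_deriv_bound\<close>, by the product itself.\<close>
lemma exp_sum_bernstein_step:
  assumes C1: "0 \<le> C1" and l: "0 < l" "l \<le> L" "C1 * l \<le> 1/2"
    and IH: "\<And>c' \<mu>' B'. \<forall>j<m. \<bar>\<mu>' j\<bar> \<le> 2 * \<bar>R\<bar> \<Longrightarrow>
      \<forall>u\<in>{a..a+L}. \<bar>exp_sum c' \<mu>' m u\<bar> \<le> B' \<Longrightarrow>
      \<forall>u\<in>{a..a+L}. \<bar>exp_sum (\<lambda>j. - c' j * \<mu>' j) \<mu>' m u\<bar> \<le> C1 * B'"
    and \<mu>: "\<forall>j<Suc m. \<bar>\<mu> j\<bar> \<le> R" and E: "\<forall>u\<in>{a..a+L}. \<bar>exp_sum c \<mu> (Suc m) u\<bar> \<le> B"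
    and u: "u \<in> {a..a+L}"
  shows "\<bar>exp_sum (\<lambda>j. - c j * \<mu> j) \<mu> (Suc m) u\<bar> \<le> (\<bar>R\<bar> + 4 * exp (2 * \<bar>R\<bar> * L) / l) * B"
proof -
  define \<nu> where "\<nu> = \<mu> m"
  have \<nu>: "\<bar>\<nu>\<bar> \<le> \<bar>R\<bar>" using \<mu> by (auto simp: \<nu>_def)
  define \<mu>' where "\<mu>' = (\<lambda>j. \<mu> j - \<nu>)"
  define w where "w = (\<lambda>j. c j * exp (- \<nu> * a))"
  define W where "W = exp_sum w \<mu>' (Suc m)"
  define V where "V = exp_sum (\<lambda>j. - w j * \<mu>' j) \<mu>' m"
  have exp_le: "exp (s * (v - a)) \<le> exp (\<bar>R\<bar> * L)" if "\<bar>s\<bar> \<le> \<bar>R\<bar>" "v \<in> {a..a+L}" for s v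
  proof -
    have "s * (v - a) \<le> \<bar>s\<bar> * (v - a)" using that by (intro mult_right_mono) auto
    also have "\<dots> \<le> \<bar>R\<bar> * L" using that by (intro mult_mono) auto
    finally show ?thesis by simp
  qed
  have W': "(W has_real_derivative V v) (at v)" for v
    using has_real_derivative_exp_sum[of w \<mu>' "Suc m" v]
    by (simp add: W_def V_def exp_sum_Suc \<mu>'_def \<nu>_def)
  have W_bound: "\<bar>W v\<bar> \<le> exp (\<bar>R\<bar> * L) * B" if "v \<in> {a..a+L}" for v
  proof -
    have "\<bar>W v\<bar> = exp (\<nu> * (v - a)) * \<bar>exp_sum c \<mu> (Suc m) v\<bar>"
      unfolding W_def w_def \<mu>'_def exp_sum_shift_frequencies[symmetric] by (simp add: abs_mult)
    also have "\<dots> \<le> exp (\<bar>R\<bar> * L) * B"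
      using exp_le[OF \<nu> that] E that by (intro mult_mono) auto
    finally show ?thesis .
  qed
  have "\<exists>v\<in>{a..a+L}. \<forall>u\<in>{a..a+L}. \<bar>V u\<bar> \<le> \<bar>V v\<bar>"
    using l unfolding V_def
    by (intro continuous_attains_sup continuous_on_rabs continuous_on_exp_sum) auto
  then obtain v where v: "v \<in> {a..a+L}" and v_max: "\<And>u. u \<in> {a..a+L} \<Longrightarrow> \<bar>V u\<bar> \<le> \<bar>V v\<bar>"
    by blast
  have "\<forall>j<m. \<bar>\<mu>' j\<bar> \<le> 2 * \<bar>R\<bar>"
  proof (intro allI impI)
    fix j assume "j < m"
    then have "\<bar>\<mu> j\<bar> \<le> R" using \<mu> less_SucI by blast
    then show "\<bar>\<mu>' j\<bar> \<le> 2 * \<bar>R\<bar>" using \<nu> by (simp add: \<mu>'_def abs_le_iff)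
  qed
  then have V'_bound:
    "\<forall>u\<in>{a..a+L}. \<bar>exp_sum (\<lambda>j. - (- w j * \<mu>' j) * \<mu>' j) \<mu>' m u\<bar> \<le> C1 * \<bar>V v\<bar>"
    using IH[of \<mu>' "\<lambda>j. - w j * \<mu>' j" "\<bar>V v\<bar>"] v_max by (simp add: V_def)
  have V': "(V has_real_derivative exp_sum (\<lambda>j. - (- w j * \<mu>' j) * \<mu>' j) \<mu>' m u) (at u)" for u
    unfolding V_def by (rule has_real_derivative_exp_sum)
  have "l * \<bar>V v\<bar> \<le> 4 * (exp (\<bar>R\<bar> * L) * B)"
    using V'_bound v l C1 by (intro slowly_varying_deriv_bound[OF W' V']) (auto simp: W_bound)
  then have V_bound: "\<bar>V v\<bar> \<le> 4 * exp (\<bar>R\<bar> * L) * B / l"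
    using l by (simp add: field_simps)
  have "\<bar>exp_sum (\<lambda>j. - c j * \<mu> j) \<mu> (Suc m) u\<bar>
      \<le> \<bar>\<nu>\<bar> * \<bar>exp_sum c \<mu> (Suc m) u\<bar> + exp (- \<nu> * (u - a)) * \<bar>V u\<bar>"
    unfolding exp_sum_deriv_eq_shifted[where a = a] V_def w_def \<mu>'_def \<nu>_def
    by (rule order_trans[OF abs_triangle_ineq]) (simp add: abs_mult)
  also have "\<dots> \<le> \<bar>R\<bar> * B + exp (\<bar>R\<bar> * L) * (4 * exp (\<bar>R\<bar> * L) * B / l)"
    using E u \<nu> exp_le[of "- \<nu>" u] v_max[OF u] V_bound
    by (intro add_mono mult_mono) auto
  also have "\<dots> = (\<bar>R\<bar> + 4 * exp (2 * \<bar>R\<bar> * L) / l) * B" by (simp add: algebra_simps mult_exp_exp)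
  finally show ?thesis .
qed

lemma exp_sum_bernstein:
  assumes "0 < L"
  shows "\<exists>C\<ge>0. \<forall>a c \<mu> B. (\<forall>j<m. \<bar>\<mu> j\<bar> \<le> R) \<longrightarrow> (\<forall>u\<in>{a..a+L}. \<bar>exp_sum c \<mu> m u\<bar> \<le> B) \<longrightarrow>
           (\<forall>u\<in>{a..a+L}. \<bar>exp_sum (\<lambda>j. - c j * \<mu> j) \<mu> m u\<bar> \<le> C * B)"
proof (induction m arbitrary: R)
  case 0
  show ?case by (rule exI[of _ 0]) (simp add: exp_sum_def)
next
  case (Suc m)
  obtain C1 where C1: "C1 \<ge> 0" and IH: "\<And>a c \<mu> B. \<forall>j<m. \<bar>\<mu> j\<bar> \<le> 2 * \<bar>R\<bar> \<Longrightarrow>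
      \<forall>u\<in>{a..a+L}. \<bar>exp_sum c \<mu> m u\<bar> \<le> B \<Longrightarrow>
      \<forall>u\<in>{a..a+L}. \<bar>exp_sum (\<lambda>j. - c j * \<mu> j) \<mu> m u\<bar> \<le> C1 * B"
    using Suc.IH[of "2 * \<bar>R\<bar>"] by blast
  define l where "l = min L (1 / (2 * C1 + 1))"
  have l: "0 < l" "l \<le> L" using assms C1 by (auto simp: l_def)
  have "C1 * l \<le> C1 * (1 / (2 * C1 + 1))" using C1 by (intro mult_left_mono) (auto simp: l_def)
  also have "\<dots> \<le> 1/2" using C1 by (simp add: field_simps)
  finally have "C1 * l \<le> 1/2" .
  then have "\<bar>exp_sum (\<lambda>j. - c j * \<mu> j) \<mu> (Suc m) u\<bar> \<le> (\<bar>R\<bar> + 4 * exp (2 * \<bar>R\<bar> * L) / l) * B"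
    if "\<forall>j<Suc m. \<bar>\<mu> j\<bar> \<le> R" "\<forall>u\<in>{a..a+L}. \<bar>exp_sum c \<mu> (Suc m) u\<bar> \<le> B" "u \<in> {a..a+L}"
    for a c \<mu> B u
    by (rule exp_sum_bernstein_step[OF C1 l _ IH[where a = a] that])
  moreover have "0 \<le> \<bar>R\<bar> + 4 * exp (2 * \<bar>R\<bar> * L) / l" using l by simp
  ultimately show ?case by blast
qed

text \<open>Applying \<open>d/du + \<mu> i\<close> to an exponential sum multiplies its \<open>j\<close>-th coefficient
  by \<open>\<mu> i - \<mu> j\<close>.\<close>
lemma exp_sum_mult_prod_insert:
  assumes "finite S" "i \<notin> S"
  shows "exp_sum (\<lambda>j. c j * (\<Prod>l\<in>insert i S. \<mu> l - \<mu> j)) \<mu> m u =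
         exp_sum (\<lambda>j. - (c j * (\<Prod>l\<in>S. \<mu> l - \<mu> j)) * \<mu> j) \<mu> m u
         + \<mu> i * exp_sum (\<lambda>j. c j * (\<Prod>l\<in>S. \<mu> l - \<mu> j)) \<mu> m u"
  using assms unfolding exp_sum_def sum_distrib_left sum.distrib[symmetric]
  by (intro sum.cong) (auto simp: algebra_simps)

lemma exp_sum_mult_prod_bound:
  assumes "0 < L"
  shows "\<exists>K\<ge>0. \<forall>a c \<mu> B S. S \<subseteq> {..<m} \<longrightarrow> (\<forall>j<m. \<bar>\<mu> j\<bar> \<le> R) \<longrightarrow>
      (\<forall>u\<in>{a..a+L}. \<bar>exp_sum c \<mu> m u\<bar> \<le> B) \<longrightarrow>
      (\<forall>u\<in>{a..a+L}. \<bar>exp_sum (\<lambda>j. c j * (\<Prod>l\<in>S. \<mu> l - \<mu> j)) \<mu> m u\<bar> \<le> K ^ card S * B)"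
proof -
  obtain C where C: "C \<ge> 0" and bernstein: "\<And>a c \<mu> B. \<forall>j<m. \<bar>\<mu> j\<bar> \<le> R \<Longrightarrow>
      \<forall>u\<in>{a..a+L}. \<bar>exp_sum c \<mu> m u\<bar> \<le> B \<Longrightarrow>
      \<forall>u\<in>{a..a+L}. \<bar>exp_sum (\<lambda>j. - c j * \<mu> j) \<mu> m u\<bar> \<le> C * B"
    using exp_sum_bernstein[OF assms, of m R] by auto
  define K where "K = C + \<bar>R\<bar>"
  have "\<forall>u\<in>{a..a+L}. \<bar>exp_sum (\<lambda>j. c j * (\<Prod>l\<in>S. \<mu> l - \<mu> j)) \<mu> m u\<bar> \<le> K ^ card S * B"
    if S: "S \<subseteq> {..<m}" and \<mu>: "\<forall>j<m. \<bar>\<mu> j\<bar> \<le> R"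
      and E: "\<forall>u\<in>{a..a+L}. \<bar>exp_sum c \<mu> m u\<bar> \<le> B" for a c \<mu> B S
    using finite_subset[OF S finite_lessThan] S
  proof (induction S rule: finite_induct)
    case empty
    then show ?case using E by simp
  next
    case (insert i S)
    have IH: "\<forall>u\<in>{a..a+L}. \<bar>exp_sum (\<lambda>j. c j * (\<Prod>l\<in>S. \<mu> l - \<mu> j)) \<mu> m u\<bar> \<le> K ^ card S * B"
      using insert by auto
    have D: "\<forall>u\<in>{a..a+L}.
        \<bar>exp_sum (\<lambda>j. - (c j * (\<Prod>l\<in>S. \<mu> l - \<mu> j)) * \<mu> j) \<mu> m u\<bar> \<le> C * (K ^ card S * B)"
      by (rule bernstein[OF \<mu> IH])
    have \<mu>i: "\<bar>\<mu> i\<bar> \<le> \<bar>R\<bar>" using insert.prems \<mu> by auto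
    show ?case
    proof
      fix u assume u: "u \<in> {a..a+L}"
      have "\<bar>exp_sum (\<lambda>j. c j * (\<Prod>l\<in>insert i S. \<mu> l - \<mu> j)) \<mu> m u\<bar>
          \<le> \<bar>exp_sum (\<lambda>j. - (c j * (\<Prod>l\<in>S. \<mu> l - \<mu> j)) * \<mu> j) \<mu> m u\<bar>
            + \<bar>\<mu> i\<bar> * \<bar>exp_sum (\<lambda>j. c j * (\<Prod>l\<in>S. \<mu> l - \<mu> j)) \<mu> m u\<bar>"
        unfolding exp_sum_mult_prod_insert[OF insert.hyps]
        by (simp add: abs_mult abs_triangle_ineq[THEN order_trans])
      also have "\<dots> \<le> C * (K ^ card S * B) + \<bar>R\<bar> * (K ^ card S * B)"
        using D u IH \<mu>i by (intro add_mono mult_mono) auto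
      also have "\<dots> = K ^ card (insert i S) * B"
        using insert.hyps by (simp add: K_def algebra_simps)
      finally show "\<bar>exp_sum (\<lambda>j. c j * (\<Prod>l\<in>insert i S. \<mu> l - \<mu> j)) \<mu> m u\<bar>
          \<le> K ^ card (insert i S) * B" .
    qed
  qed
  moreover have "K \<ge> 0" using C by (simp add: K_def)
  ultimately show ?thesis by blast
qed

lemma abs_increment_le_dominating_increment:
  fixes Z Z' Y Y' :: "real \<Rightarrow> real"
  assumes Z': "\<And>x. (Z has_real_derivative Z' x) (at x)" and Y': "\<And>x. (Y has_real_derivative Y' x) (at x)"
    and dom: "\<And>x. a \<le> x \<Longrightarrow> x \<le> b \<Longrightarrow> \<bar>Z' x\<bar> \<le> Y' x" and "a \<le> b"
  shows "\<bar>Z b - Z a\<bar> \<le> Y b - Y a"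
proof -
  have "(\<lambda>x. Y x - Z x) a \<le> (\<lambda>x. Y x - Z x) b"
  proof (rule DERIV_nonneg_imp_nondecreasing[OF \<open>a \<le> b\<close>])
    fix x assume "a \<le> x" "x \<le> b"
    then show "\<exists>y. ((\<lambda>x. Y x - Z x) has_real_derivative y) (at x) \<and> 0 \<le> y"
      using dom[of x] by (intro exI[of _ "Y' x - Z' x"]) (auto intro: derivative_intros Y' Z')
  qed
  moreover have "(\<lambda>x. Y x + Z x) a \<le> (\<lambda>x. Y x + Z x) b"
  proof (rule DERIV_nonneg_imp_nondecreasing[OF \<open>a \<le> b\<close>])
    fix x assume "a \<le> x" "x \<le> b"
    then show "\<exists>y. ((\<lambda>x. Y x + Z x) has_real_derivative y) (at x) \<and> 0 \<le> y"
      using dom[of x] by (intro exI[of _ "Y' x + Z' x"]) (auto intro: derivative_intros Y' Z')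
  qed
  ultimately show ?thesis by (simp add: abs_le_iff)
qed

lemma damped_ode_decay:
  fixes h h' :: "real \<Rightarrow> real"
  assumes h': "\<And>u. (h has_real_derivative h' u) (at u)" and \<nu>: "1 \<le> \<nu>" and K: "0 \<le> K"
    and damped: "\<And>u. 0 \<le> u \<Longrightarrow> \<bar>h' u + \<nu> * h u\<bar> \<le> K * exp (- u / 2)"
    and u: "0 \<le> u"
  shows "\<bar>h u\<bar> \<le> (\<bar>h 0\<bar> + 2 * K) * exp (- u / 2)"
proof -
  define Z where "Z = (\<lambda>u. exp (\<nu> * u) * h u)"
  define \<kappa> where "\<kappa> = \<nu> - 1/2"
  have \<kappa>: "1/2 \<le> \<kappa>" using \<nu> by (simp add: \<kappa>_def)
  have "\<bar>Z u - Z 0\<bar> \<le> K * exp (\<kappa> * u) / \<kappa> - K * exp (\<kappa> * 0) / \<kappa>"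
  proof (rule abs_increment_le_dominating_increment[OF _ _ _ u])
    show "(Z has_real_derivative exp (\<nu> * x) * (h' x + \<nu> * h x)) (at x)" for x
      unfolding Z_def by (auto intro!: derivative_eq_intros h' simp: algebra_simps)
    show "((\<lambda>u. K * exp (\<kappa> * u) / \<kappa>) has_real_derivative K * exp (\<kappa> * x)) (at x)" for x
      using \<kappa> by (auto intro!: derivative_eq_intros)
    show "\<bar>exp (\<nu> * x) * (h' x + \<nu> * h x)\<bar> \<le> K * exp (\<kappa> * x)" if "0 \<le> x" for x
    proof -
      have "\<bar>exp (\<nu> * x) * (h' x + \<nu> * h x)\<bar> \<le> exp (\<nu> * x) * (K * exp (- x / 2))"
        using damped[OF that] by (simp add: abs_mult)
      also have "\<dots> = K * exp (\<kappa> * x)"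
        by (simp add: \<kappa>_def algebra_simps flip: exp_add)
      finally show ?thesis .
    qed
  qed
  moreover have "0 \<le> K / \<kappa>" using K \<kappa> by simp
  ultimately have Z_bound: "\<bar>Z u\<bar> \<le> \<bar>h 0\<bar> + K * exp (\<kappa> * u) / \<kappa>"
    by (simp add: Z_def abs_le_iff) linarith
  have "\<bar>h u\<bar> = exp (- \<nu> * u) * \<bar>Z u\<bar>"
    by (simp add: Z_def abs_mult mult.assoc flip: exp_add)
  also have "\<dots> \<le> exp (- \<nu> * u) * (\<bar>h 0\<bar> + K * exp (\<kappa> * u) / \<kappa>)"
    using Z_bound by (intro mult_left_mono) auto
  also have "\<dots> = exp (- \<nu> * u) * \<bar>h 0\<bar> + K * exp (- u / 2) / \<kappa>"
    by (simp add: \<kappa>_def algebra_simps flip: exp_add)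
  also have "\<dots> \<le> exp (- u / 2) * \<bar>h 0\<bar> + K * exp (- u / 2) * 2"
  proof (intro add_mono mult_right_mono)
    have "u \<le> \<nu> * u" using mult_right_mono[OF \<nu> u] by simp
    then show "exp (- \<nu> * u) \<le> exp (- u / 2)" using u by simp
    show "K * exp (- u / 2) / \<kappa> \<le> K * exp (- u / 2) * 2"
      using \<kappa> K by (simp add: field_simps mult_left_mono)
  qed auto
  also have "\<dots> = (\<bar>h 0\<bar> + 2 * K) * exp (- u / 2)" by (simp add: algebra_simps)
  finally show ?thesis .
qed

text \<open>For \<open>E = exp_sum c \<mu> m\<close> write \<open>H\<^sub>k = (\<Prod>l<k. d/du + \<mu> l) E\<close>.  Then \<open>H\<^sub>m = 0\<close> and
  \<open>H\<^sub>k' + \<mu> k H\<^sub>k = H\<^sub>k\<^sub>+\<^sub>1\<close>, so decay propagates downwards from \<open>H\<^sub>m\<close> to \<open>H\<^sub>0 = E\<close>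
  by \<open>damped_ode_decay\<close>; the initial values \<open>H\<^sub>k 0\<close> are controlled by
  \<open>exp_sum_mult_prod_bound\<close>.\<close>
lemma exp_sum_decay:
  assumes "1 \<le> Q"
  shows "\<exists>K\<ge>0. \<forall>c \<mu> B. (\<forall>j<m. 1 \<le> \<mu> j \<and> \<mu> j \<le> Q) \<longrightarrow> (\<forall>u\<ge>0. \<bar>exp_sum c \<mu> m u\<bar> \<le> B) \<longrightarrow>
            (\<forall>u\<ge>0. \<bar>exp_sum c \<mu> m u\<bar> \<le> K * B * exp (- u / 2))"
proof -
  obtain K0 where K0: "K0 \<ge> 0" and prod_bound: "\<And>a c \<mu> B S. S \<subseteq> {..<m} \<Longrightarrow>
      \<forall>j<m. \<bar>\<mu> j\<bar> \<le> Q \<Longrightarrow> \<forall>u\<in>{a..a+1}. \<bar>exp_sum c \<mu> m u\<bar> \<le> B \<Longrightarrow>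
      \<forall>u\<in>{a..a+1}. \<bar>exp_sum (\<lambda>j. c j * (\<Prod>l\<in>S. \<mu> l - \<mu> j)) \<mu> m u\<bar> \<le> K0 ^ card S * B"
    using exp_sum_mult_prod_bound[of 1 m Q] by auto
  define H where "H c \<mu> k = exp_sum (\<lambda>j. c j * (\<Prod>l<k. \<mu> l - \<mu> j)) \<mu> m" for c \<mu> k
  have "\<exists>K\<ge>0. \<forall>c \<mu> B. (\<forall>j<m. 1 \<le> \<mu> j \<and> \<mu> j \<le> Q) \<longrightarrow> (\<forall>u\<ge>0. \<bar>exp_sum c \<mu> m u\<bar> \<le> B) \<longrightarrow>
            (\<forall>u\<ge>0. \<bar>H c \<mu> k u\<bar> \<le> K * B * exp (- u / 2))" if "k \<le> m" for k
    using that
  proof (induction k rule: inc_induct)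
    case base
    have "H c \<mu> m u = 0" for c \<mu> u
      unfolding H_def exp_sum_def by (intro sum.neutral) auto
    then show ?case by (intro exI[of _ 0]) auto
  next
    case (step k)
    obtain K' where K': "K' \<ge> 0" and IH: "\<And>c \<mu> B. \<forall>j<m. 1 \<le> \<mu> j \<and> \<mu> j \<le> Q \<Longrightarrow>
        \<forall>u\<ge>0. \<bar>exp_sum c \<mu> m u\<bar> \<le> B \<Longrightarrow> \<forall>u\<ge>0. \<bar>H c \<mu> (Suc k) u\<bar> \<le> K' * B * exp (- u / 2)"
      using step.IH by auto
    have "\<bar>H c \<mu> k u\<bar> \<le> (K0 ^ k + 2 * K') * B * exp (- u / 2)"
      if \<mu>: "\<forall>j<m. 1 \<le> \<mu> j \<and> \<mu> j \<le> Q" and E: "\<forall>u\<ge>0. \<bar>exp_sum c \<mu> m u\<bar> \<le> B"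
        and u: "u \<ge> 0" for c \<mu> B u
    proof -
      define H' where "H' = exp_sum (\<lambda>j. - (c j * (\<Prod>l<k. \<mu> l - \<mu> j)) * \<mu> j) \<mu> m"
      have "B \<ge> 0" using E[rule_format, of 0] by auto
      have H_0: "\<bar>H c \<mu> k 0\<bar> \<le> K0 ^ k * B"
        using prod_bound[of "{..<k}" \<mu> 0 c B] step.hyps \<mu> E unfolding H_def by force
      have "H' v + \<mu> k * H c \<mu> k v = H c \<mu> (Suc k) v" for v
        unfolding H_def H'_def lessThan_Suc by (rule exp_sum_mult_prod_insert[symmetric]) auto
      then have damped: "\<bar>H' v + \<mu> k * H c \<mu> k v\<bar> \<le> (K' * B) * exp (- v / 2)" if "v \<ge> 0" for v
        using IH[OF \<mu> E] that by auto
      have H': "(H c \<mu> k has_real_derivative H' v) (at v)" for v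
        unfolding H_def H'_def by (rule has_real_derivative_exp_sum)
      have "\<bar>H c \<mu> k u\<bar> \<le> (\<bar>H c \<mu> k 0\<bar> + 2 * (K' * B)) * exp (- u / 2)"
        using \<mu> step.hyps K' \<open>B \<ge> 0\<close> by (intro damped_ode_decay[OF H' _ _ damped u]) auto
      also have "\<dots> \<le> (K0 ^ k * B + 2 * (K' * B)) * exp (- u / 2)"
        using H_0 by (intro mult_right_mono) auto
      finally show ?thesis by (simp add: algebra_simps)
    qed
    moreover have "K0 ^ k + 2 * K' \<ge> 0" using K0 K' by simp
    ultimately show ?case by blast
  qed
  from this[of 0] show ?thesis by (simp add: H_def)
qed

lemma exp_sum_deriv_decay:
  assumes "1 \<le> Q"
  shows "\<exists>K\<ge>0. \<forall>c \<mu> B. (\<forall>j<m. 1 \<le> \<mu> j \<and> \<mu> j \<le> Q) \<longrightarrow> (\<forall>u\<ge>0. \<bar>exp_sum c \<mu> m u\<bar> \<le> B) \<longrightarrow>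
            (\<forall>u\<ge>0. \<bar>exp_sum (\<lambda>j. - c j * \<mu> j) \<mu> m u\<bar> \<le> K * B * exp (- u / 2))"
proof -
  obtain C where C: "C \<ge> 0" and bernstein: "\<And>a c \<mu> B. \<forall>j<m. \<bar>\<mu> j\<bar> \<le> Q \<Longrightarrow>
      \<forall>u\<in>{a..a+1}. \<bar>exp_sum c \<mu> m u\<bar> \<le> B \<Longrightarrow>
      \<forall>u\<in>{a..a+1}. \<bar>exp_sum (\<lambda>j. - c j * \<mu> j) \<mu> m u\<bar> \<le> C * B"
    using exp_sum_bernstein[of 1 m Q] by auto
  obtain K where K: "K \<ge> 0" and decay: "\<And>c \<mu> B. \<forall>j<m. 1 \<le> \<mu> j \<and> \<mu> j \<le> Q \<Longrightarrow>
      \<forall>u\<ge>0. \<bar>exp_sum c \<mu> m u\<bar> \<le> B \<Longrightarrow> \<forall>u\<ge>0. \<bar>exp_sum c \<mu> m u\<bar> \<le> K * B * exp (- u / 2)"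
    using exp_sum_decay[OF assms, of m] by blast
  have "\<forall>u\<ge>0. \<bar>exp_sum (\<lambda>j. - c j * \<mu> j) \<mu> m u\<bar> \<le> (K * C) * B * exp (- u / 2)"
    if \<mu>: "\<forall>j<m. 1 \<le> \<mu> j \<and> \<mu> j \<le> Q" and E: "\<forall>u\<ge>0. \<bar>exp_sum c \<mu> m u\<bar> \<le> B" for c \<mu> B
  proof -
    have "\<forall>j<m. \<bar>\<mu> j\<bar> \<le> Q" using \<mu> by auto
    then have "\<bar>exp_sum (\<lambda>j. - c j * \<mu> j) \<mu> m u\<bar> \<le> C * B" if "u \<ge> 0" for u
      using bernstein[of \<mu> u c B] E that by auto
    then have "\<forall>u\<ge>0. \<bar>exp_sum (\<lambda>j. - c j * \<mu> j) \<mu> m u\<bar> \<le> K * (C * B) * exp (- u / 2)"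
      by (intro decay \<mu>) auto
    then show ?thesis by (simp add: algebra_simps)
  qed
  moreover have "K * C \<ge> 0" using K C by simp
  ultimately show ?thesis by blast
qed

text \<open>The operator \<open>\<Prod>l\<noteq>j. d/du + \<mu> l\<close> kills every term except the \<open>j\<close>-th, which
  it multiplies by \<open>\<Prod>l\<noteq>j. \<mu> l - \<mu> j \<noteq> 0\<close>.\<close>
lemma exp_sum_coeff_bound:
  assumes inj: "inj_on \<mu> {..<m}"
  shows "\<exists>K\<ge>0. \<forall>c B j. (\<forall>u\<in>{0..1}. \<bar>exp_sum c \<mu> m u\<bar> \<le> B) \<longrightarrow> j < m \<longrightarrow> \<bar>c j\<bar> \<le> K * B"
proof -
  define R where "R = (\<Sum>j<m. \<bar>\<mu> j\<bar>)"
  have R: "\<forall>j<m. \<bar>\<mu> j\<bar> \<le> R"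
    unfolding R_def by (auto intro: member_le_sum)
  obtain K0 where K0: "K0 \<ge> 0" and prod_bound: "\<forall>a c \<mu>' B S. S \<subseteq> {..<m} \<longrightarrow>
      (\<forall>j<m. \<bar>\<mu>' j\<bar> \<le> R) \<longrightarrow> (\<forall>u\<in>{a..a+1}. \<bar>exp_sum c \<mu>' m u\<bar> \<le> B) \<longrightarrow>
      (\<forall>u\<in>{a..a+1}. \<bar>exp_sum (\<lambda>j. c j * (\<Prod>l\<in>S. \<mu>' l - \<mu>' j)) \<mu>' m u\<bar> \<le> K0 ^ card S * B)"
    using exp_sum_mult_prod_bound[of 1 m R] by auto
  define P where "P j = \<bar>\<Prod>l\<in>{..<m} - {j}. \<mu> l - \<mu> j\<bar>" for j
  have P: "0 < P j" if "j < m" for j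
    using inj that by (auto simp: P_def inj_on_def)
  define K where "K = (\<Sum>j<m. K0 ^ card ({..<m} - {j}) / P j)"
  have "\<bar>c j\<bar> \<le> K * B" if E: "\<forall>u\<in>{0..1}. \<bar>exp_sum c \<mu> m u\<bar> \<le> B" and j: "j < m" for c B j
  proof -
    define S where "S = {..<m} - {j}"
    have "exp_sum (\<lambda>i. c i * (\<Prod>l\<in>S. \<mu> l - \<mu> i)) \<mu> m 0 = c j * (\<Prod>l\<in>S. \<mu> l - \<mu> j)"
    proof -
      have "exp_sum (\<lambda>i. c i * (\<Prod>l\<in>S. \<mu> l - \<mu> i)) \<mu> m 0 = (\<Sum>i<m. c i * (\<Prod>l\<in>S. \<mu> l - \<mu> i))"
        by (simp add: exp_sum_def)
      also have "\<dots> = c j * (\<Prod>l\<in>S. \<mu> l - \<mu> j)"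
        by (rule sum.remove[OF _ lessThan_iff[THEN iffD2, OF j], THEN trans])
           (auto simp: S_def intro!: sum.neutral)
      finally show ?thesis .
    qed
    moreover have "\<bar>exp_sum (\<lambda>i. c i * (\<Prod>l\<in>S. \<mu> l - \<mu> i)) \<mu> m 0\<bar> \<le> K0 ^ card S * B"
      using prod_bound[rule_format, of S \<mu> 0 c B] R E by (auto simp: S_def)
    ultimately have "\<bar>c j\<bar> * P j \<le> K0 ^ card S * B"
      by (simp add: P_def S_def abs_mult)
    then have "\<bar>c j\<bar> \<le> K0 ^ card S / P j * B"
      using P[OF j] by (simp add: field_simps)
    also have "\<dots> \<le> K * B"
    proof (rule mult_right_mono)
      show "K0 ^ card S / P j \<le> K"
        unfolding K_def S_def using j K0 P by (intro member_le_sum) (auto intro!: divide_nonneg_pos)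
      show "0 \<le> B" using E by force
    qed
    finally show ?thesis .
  qed
  moreover have "0 \<le> K" unfolding K_def using K0 P by (intro sum_nonneg) (auto intro!: divide_nonneg_pos)
  ultimately show ?thesis by blast
qed


section \<open>Sup norm and derivatives on [0,1]\<close>

lemma sup_norm01_le:
  assumes "\<And>t. t \<in> {0..1} \<Longrightarrow> \<bar>g t\<bar> \<le> E"
  shows "sup_norm01 g \<le> E"
  unfolding sup_norm01_def by (rule cSUP_least) (use assms in auto)

lemma abs_le_sup_norm01:
  assumes "\<And>t. t \<in> {0..1} \<Longrightarrow> \<bar>g t\<bar> \<le> E" and "t \<in> {0..1}"
  shows "\<bar>g t\<bar> \<le> sup_norm01 g"
  unfolding sup_norm01_def
  by (rule cSUP_upper[OF \<open>t \<in> {0..1}\<close>], rule bdd_aboveI2[where M = E]) (use assms in auto)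

lemma lipschitz_of_interior_deriv_bound:
  fixes g d :: "real \<Rightarrow> real"
  assumes cont: "continuous_on {a..b} g"
    and d: "\<And>t. a < t \<Longrightarrow> t < b \<Longrightarrow> (g has_real_derivative d t) (at t)"
    and bound: "\<And>t. a < t \<Longrightarrow> t < b \<Longrightarrow> \<bar>d t\<bar> \<le> E"
    and x: "x \<in> {a..b}" and y: "y \<in> {a..b}"
  shows "\<bar>g x - g y\<bar> \<le> E * \<bar>x - y\<bar>"
proof -
  have *: "\<bar>g v - g u\<bar> \<le> E * (v - u)" if "u < v" "u \<in> {a..b}" "v \<in> {a..b}" for u v
  proof -
    have "continuous_on {u..v} g" using that by (intro continuous_on_subset[OF cont]) auto
    moreover have "g differentiable (at z)" if "u < z" "z < v" for z
      using d[of z] that \<open>u \<in> {a..b}\<close> \<open>v \<in> {a..b}\<close> real_differentiable_def by force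
    ultimately obtain l z where z: "u < z" "z < v" "(g has_real_derivative l) (at z)"
      and eq: "g v - g u = (v - u) * l"
      using MVT[OF \<open>u < v\<close>] by blast
    have "l = d z" using DERIV_unique[OF z(3) d[of z]] z that by auto
    then have "\<bar>l\<bar> \<le> E" using bound[of z] z that by auto
    then show ?thesis using eq that by (simp add: abs_mult mult_left_mono)
  qed
  show ?thesis
    using *[of x y] *[of y x] x y by (cases x y rule: linorder_cases) (auto simp: abs_minus_commute)
qed

lemma abs_deriv_le_of_lipschitz:
  fixes g :: "real \<Rightarrow> real"
  assumes g': "(g has_real_derivative d) (at x within S)" and nontrivial: "at x within S \<noteq> bot"
    and lipschitz: "\<And>y. y \<in> S \<Longrightarrow> \<bar>g y - g x\<bar> \<le> E * \<bar>y - x\<bar>"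
  shows "\<bar>d\<bar> \<le> E"
proof -
  have "((\<lambda>y. \<bar>(g y - g x) / (y - x)\<bar>) \<longlongrightarrow> \<bar>d\<bar>) (at x within S)"
    using g' by (intro tendsto_rabs) (simp add: has_field_derivative_iff)
  moreover have "\<forall>\<^sub>F y in at x within S. \<bar>(g y - g x) / (y - x)\<bar> \<le> E"
    unfolding eventually_at_filter
    by (intro always_eventually allI impI) (use lipschitz in \<open>simp add: divide_le_eq abs_divide\<close>)
  ultimately show ?thesis by (rule tendsto_le[OF nontrivial tendsto_const])
qed

lemma abs_deriv_le_of_interior_bound:
  fixes g f' :: "real \<Rightarrow> real"
  assumes f': "\<forall>t\<in>{0..1}. (g has_real_derivative f' t) (at t within {0..1})"
    and bound: "\<And>t. 0 < t \<Longrightarrow> t < 1 \<Longrightarrow> \<bar>f' t\<bar> \<le> E" and t: "t \<in> {0..1}"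
  shows "\<bar>f' t\<bar> \<le> E"
proof (rule abs_deriv_le_of_lipschitz[OF f'[rule_format, OF t]])
  show "at t within {0..1} \<noteq> bot" using t by (simp add: trivial_limit_within)
  have "continuous_on {0..1} g" using f' by (intro DERIV_continuous_on) auto
  moreover have "(g has_real_derivative f' s) (at s)" if "0 < s" "s < 1" for s
    using f'[rule_format, of s] that by (simp add: at_within_Icc_at)
  ultimately show "\<bar>g s - g t\<bar> \<le> E * \<bar>s - t\<bar>" if "s \<in> {0..1}" for s
    using lipschitz_of_interior_deriv_bound bound that t by blast
qed

lemma abs_le_sup_norm01_deriv_mult:
  fixes g f' :: "real \<Rightarrow> real"
  assumes "g 0 = 0" and f': "\<forall>t\<in>{0..1}. (g has_real_derivative f' t) (at t within {0..1})"
    and bound: "\<And>t. t \<in> {0..1} \<Longrightarrow> \<bar>f' t\<bar> \<le> E" and x: "x \<in> {0..1}"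
  shows "\<bar>g x\<bar> \<le> sup_norm01 f' * x"
proof -
  have "continuous_on {0..1} g" using f' by (intro DERIV_continuous_on) auto
  moreover have "(g has_real_derivative f' s) (at s)" if "0 < s" "s < 1" for s
    using f'[rule_format, of s] that by (simp add: at_within_Icc_at)
  moreover have "\<bar>f' s\<bar> \<le> sup_norm01 f'" if "0 < s" "s < 1" for s
    using abs_le_sup_norm01[of f' E s] bound that by simp
  ultimately have "\<bar>g x - g 0\<bar> \<le> sup_norm01 f' * \<bar>x - 0\<bar>"
    using x by (intro lipschitz_of_interior_deriv_bound[of 0 1]) auto
  then show ?thesis using x \<open>g 0 = 0\<close> by simp
qed

lemma sup_norm01_le_sup_norm01_deriv:
  fixes g f' :: "real \<Rightarrow> real"
  assumes "g 0 = 0" and f': "\<forall>t\<in>{0..1}. (g has_real_derivative f' t) (at t within {0..1})"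
    and bound: "\<And>t. t \<in> {0..1} \<Longrightarrow> \<bar>f' t\<bar> \<le> E"
  shows "sup_norm01 g \<le> sup_norm01 f'"
proof (rule sup_norm01_le)
  fix t :: real assume t: "t \<in> {0..1}"
  have "0 \<le> sup_norm01 f'" using abs_le_sup_norm01[of f' E 0] bound by force
  then have "sup_norm01 f' * t \<le> sup_norm01 f'" using t by (simp add: mult_left_le)
  then show "\<bar>g t\<bar> \<le> sup_norm01 f'"
    using abs_le_sup_norm01_deriv_mult[OF assms t] by linarith
qed

lemma power_sum_lowest_term_tendsto:
  fixes lam a :: "nat \<Rightarrow> real"
  assumes lam: "strict_mono lam" and j: "j < p" and lower: "\<And>i. i < j \<Longrightarrow> a i = 0"
  shows "((\<lambda>t. \<Sum>i<p. a i * t powr (lam i - lam j)) \<longlongrightarrow> a j) (at_right 0)"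
proof -
  have "((\<lambda>t. a i * t powr (lam i - lam j)) \<longlongrightarrow> (if i = j then a j else 0)) (at_right 0)" for i
  proof (cases i j rule: linorder_cases)
    case less
    then show ?thesis using lower by simp
  next
    case equal
    have "\<forall>\<^sub>F t in at_right 0. a i * t powr (lam i - lam j) = a j"
      using equal by (intro eventually_at_rightI[of 0 1]) auto
    then have "((\<lambda>t. a i * t powr (lam i - lam j)) \<longlongrightarrow> a j) (at_right 0)"
      by (rule tendsto_eventually)
    with equal show ?thesis by simp
  next
    case greater
    then have "0 < lam i - lam j" using lam by (simp add: strict_mono_less)
    then have "((\<lambda>t::real. t powr (lam i - lam j)) \<longlongrightarrow> 0) (at_right 0)"
      by (intro tendsto_zero_powrI tendsto_ident_at tendsto_const eventually_at_rightI[of 0 1]) auto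
    then show ?thesis using greater by (auto intro: tendsto_mult_right_zero)
  qed
  then have "((\<lambda>t. \<Sum>i<p. a i * t powr (lam i - lam j)) \<longlongrightarrow> (\<Sum>i<p. if i = j then a j else 0)) (at_right 0)"
    by (intro tendsto_sum)
  then show ?thesis using j by simp
qed

text \<open>A differentiable power sum has no terms \<open>t powr lam j\<close> with \<open>lam j < 1\<close>: if \<open>a j\<close> were the
  first nonzero such coefficient, \<open>t powr (- lam j)\<close> times the sum would tend to \<open>a j\<close>,
  whereas it equals \<open>t powr (1 - lam j)\<close> times a bounded difference quotient.\<close>
lemma power_sum_coeff_eq_0_if_differentiable:
  fixes lam a :: "nat \<Rightarrow> real"
  assumes lam: "strict_mono lam"
    and deriv: "((\<lambda>t. \<Sum>i<p. a i * t powr lam i) has_real_derivative D) (at 0 within {0..1})"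
  shows "j < p \<Longrightarrow> lam j < 1 \<Longrightarrow> a j = 0"
proof (induction j rule: less_induct)
  case (less j)
  have lower: "a i = 0" if "i < j" for i
  proof -
    have "lam i < lam j" using lam that by (simp add: strict_mono_less)
    then show ?thesis using less.IH[of i] that less.prems by simp
  qed
  have "((\<lambda>t. (\<Sum>i<p. a i * t powr lam i) / t) \<longlongrightarrow> D) (at_right 0)"
    using deriv by (simp add: has_field_derivative_iff at_within_Icc_at_right)
  moreover have "((\<lambda>t::real. t powr (1 - lam j)) \<longlongrightarrow> 0) (at_right 0)"
    using less.prems
    by (intro tendsto_zero_powrI tendsto_ident_at tendsto_const eventually_at_rightI[of 0 1]) auto
  ultimately have "((\<lambda>t. t powr (1 - lam j) * ((\<Sum>i<p. a i * t powr lam i) / t)) \<longlongrightarrow> 0 * D) (at_right 0)"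
    by (intro tendsto_mult)
  moreover have "\<forall>\<^sub>F t in at_right 0.
      t powr (1 - lam j) * ((\<Sum>i<p. a i * t powr lam i) / t) = (\<Sum>i<p. a i * t powr (lam i - lam j))"
  proof (intro eventually_at_rightI[of 0 1])
    fix t :: real assume "t \<in> {0<..<1}"
    then have "t powr (1 - lam j) * (a i * t powr lam i / t) = a i * t powr (lam i - lam j)" for i
      by (simp add: powr_add [symmetric] powr_diff)
    then show "t powr (1 - lam j) * ((\<Sum>i<p. a i * t powr lam i) / t) = (\<Sum>i<p. a i * t powr (lam i - lam j))"
      unfolding sum_divide_distrib sum_distrib_left by simp
  qed simp
  ultimately have "((\<lambda>t. \<Sum>i<p. a i * t powr (lam i - lam j)) \<longlongrightarrow> 0) (at_right 0)"
    by (simp add: tendsto_cong)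
  then show "a j = 0"
    using power_sum_lowest_term_tendsto[OF lam less.prems(1) lower] tendsto_unique by force
qed


lemma power_sum_deriv_bound:
  fixes a lam :: "nat \<Rightarrow> real"
  assumes lam: "\<And>j. 0 < lam j" and a: "\<And>j. j < p \<Longrightarrow> \<bar>a j\<bar> \<le> B"
    and vanish: "\<And>j. j < p \<Longrightarrow> lam j < 1 \<Longrightarrow> a j = 0" and s: "0 < s" "s \<le> 1"
  shows "\<bar>\<Sum>j<p. a j * (lam j * s powr (lam j - 1))\<bar> \<le> B * (\<Sum>j<p. lam j)"
proof -
  have "\<bar>a j * (lam j * s powr (lam j - 1))\<bar> \<le> B * lam j" if j: "j < p" for j
  proof (cases "lam j < 1")
    case True
    then show ?thesis using vanish[OF j] a[OF j] lam[of j] by simp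
  next
    case False
    then have "s powr (lam j - 1) \<le> 1" using s by (intro powr_le1) auto
    then have "\<bar>a j * (lam j * s powr (lam j - 1))\<bar> \<le> \<bar>a j\<bar> * lam j"
      using lam[of j] by (simp add: abs_mult mult_left_le mult_left_mono)
    also have "\<dots> \<le> B * lam j"
      using a[OF j] lam[of j] by (intro mult_right_mono) auto
    finally show ?thesis .
  qed
  then have "\<bar>\<Sum>j<p. a j * (lam j * s powr (lam j - 1))\<bar> \<le> (\<Sum>j<p. B * lam j)"
    by (intro order_trans[OF sum_abs sum_mono]) auto
  then show ?thesis by (simp add: sum_distrib_left)
qed

section \<open>Blocks of a quasi-lacunary sequence\<close>

lemma block_fun_at_0: "block_fun lam n k c 0 = 0"
  by (simp add: block_fun_def)

lemma abs_block_fun_le_sum_abs_coeffs: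
  assumes "\<And>j. 0 < lam j" and "t \<in> {0..1}"
  shows "\<bar>block_fun lam n k c t\<bar> \<le> (\<Sum>j\<in>{n k..<n (Suc k)}. \<bar>c j\<bar>)"
proof -
  have "\<bar>block_fun lam n k c t\<bar> \<le> (\<Sum>j\<in>{n k..<n (Suc k)}. \<bar>c j * t powr lam j\<bar>)"
    unfolding block_fun_def by (rule sum_abs)
  also have "\<dots> \<le> (\<Sum>j\<in>{n k..<n (Suc k)}. \<bar>c j\<bar>)"
  proof (rule sum_mono)
    fix j
    have "t powr lam j \<le> 1" using assms by (intro powr_le1) (auto intro: less_imp_le)
    then show "\<bar>c j * t powr lam j\<bar> \<le> \<bar>c j\<bar>" by (simp add: abs_mult mult_left_le)
  qed
  finally show ?thesis .
qed

lemma abs_block_fun_le_sup_norm01: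
  assumes "\<And>j. 0 < lam j" and "t \<in> {0..1}"
  shows "\<bar>block_fun lam n k c t\<bar> \<le> sup_norm01 (block_fun lam n k c)"
  using abs_le_sup_norm01 abs_block_fun_le_sum_abs_coeffs assms by metis

lemma sup_norm01_block_fun_pos:
  assumes "\<And>j. 0 < lam j" and "\<exists>t\<in>{0..1}. block_fun lam n k c t \<noteq> 0"
  shows "0 < sup_norm01 (block_fun lam n k c)"
  using assms abs_block_fun_le_sup_norm01 by (metis zero_less_abs_iff order_less_le_trans)

lemma quasi_lacunary_block_ratio_le:
  assumes "quasi_lacunary lam q N n" and "0 < lam (n k)"
  shows "lam (n (Suc k)) \<le> q ^ (2 * N) * lam (n k)"
proof -
  have "lam (n (Suc k)) / lam (n k) \<le> q ^ (2 * N)"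
    using assms(1) by (simp add: quasi_lacunary_def)
  then show ?thesis using assms(2) by (simp add: pos_divide_le_eq)
qed

lemma quasi_lacunary_eventually_ge:
  assumes "quasi_lacunary lam q N n" and "\<And>j. 0 < lam j"
  obtains k0 where "\<And>k. k0 \<le> k \<Longrightarrow> b \<le> lam (n k)"
proof -
  have q: "1 < q" and ratio: "\<And>k. q * lam (n k) \<le> lam (n (Suc k))"
    using assms by (auto simp: quasi_lacunary_def pos_le_divide_eq mult.commute)
  have grow: "q ^ k * lam 0 \<le> lam (n k)" for k
  proof (induction k)
    case 0 then show ?case using assms(1) by (simp add: quasi_lacunary_def)
  next
    case (Suc k)
    then have "q * (q ^ k * lam 0) \<le> q * lam (n k)" using q by simp
    then show ?case using ratio[of k] by simp
  qed
  obtain k0 where "b / lam 0 < q ^ k0" using real_arch_pow[OF q] by blast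
  then have "b \<le> q ^ k0 * lam 0" using assms(2)[of 0] by (simp add: divide_less_eq)
  also have "\<dots> \<le> q ^ k * lam 0" if "k0 \<le> k" for k
    using that q assms(2)[of 0] by (intro mult_right_mono power_increasing) auto
  finally show ?thesis using that grow order_trans by blast
qed

text \<open>The block is padded with zero terms to exactly \<open>N\<close> summands, so that the constants
  obtained from \<open>exp_sum_decay\<close> do not depend on \<open>k\<close>.\<close>
lemma block_fun_eq_exp_sum:
  assumes lam: "strict_mono lam" "\<And>j. 0 < lam j"
    and size: "n (Suc k) - n k \<le> N" and ratio: "lam (n (Suc k)) \<le> Q * lam (n k)" and "1 \<le> Q"
  obtains a \<mu> where "\<forall>j<N. 1 \<le> \<mu> j \<and> \<mu> j \<le> Q"
    and "\<And>t. 0 < t \<Longrightarrow> block_fun lam n k c t = exp_sum a \<mu> N (- lam (n k) * ln t)"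
proof
  define s where "s = n (Suc k) - n k"
  define \<Lambda> where "\<Lambda> = lam (n k)"
  have "0 < \<Lambda>" using lam by (simp add: \<Lambda>_def)
  show "\<forall>j<N. 1 \<le> (if j < s then lam (n k + j) / \<Lambda> else 1) \<and> (if j < s then lam (n k + j) / \<Lambda> else 1) \<le> Q"
  proof (intro allI impI)
    fix j assume "j < N"
    show "1 \<le> (if j < s then lam (n k + j) / \<Lambda> else 1) \<and> (if j < s then lam (n k + j) / \<Lambda> else 1) \<le> Q"
    proof (cases "j < s")
      case True
      have "\<Lambda> \<le> lam (n k + j)" using lam by (simp add: \<Lambda>_def strict_mono_less_eq)
      moreover have "lam (n k + j) < lam (n (Suc k))"
        using True lam(1) by (simp add: s_def strict_mono_less)
      then have "lam (n k + j) \<le> Q * \<Lambda>" using ratio by (simp add: \<Lambda>_def)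
      ultimately show ?thesis using True \<open>0 < \<Lambda>\<close> by (simp add: pos_divide_le_eq)
    qed (use \<open>1 \<le> Q\<close> in simp)
  qed
  show "block_fun lam n k c t = exp_sum (\<lambda>j. if j < s then c (n k + j) else 0)
      (\<lambda>j. if j < s then lam (n k + j) / \<Lambda> else 1) N (- lam (n k) * ln t)" if "0 < t" for t
  proof -
    have "{n k..<n (Suc k)} = (\<lambda>j. n k + j) ` {..<s}"
    proof (intro set_eqI iffI)
      fix x assume "x \<in> {n k..<n (Suc k)}"
      then show "x \<in> (\<lambda>j. n k + j) ` {..<s}"
        by (intro image_eqI[of x _ "x - n k"]) (auto simp: s_def)
    qed (auto simp: s_def)
    then have "block_fun lam n k c t = (\<Sum>j<s. c (n k + j) * t powr lam (n k + j))"
      unfolding block_fun_def by (simp add: sum.reindex)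
    also have "\<dots> = (\<Sum>j\<in>{..<N} \<inter> {..<s}. c (n k + j) * t powr lam (n k + j))"
      using size by (simp add: s_def Int_absorb1)
    also have "\<dots> = exp_sum (\<lambda>j. if j < s then c (n k + j) else 0)
        (\<lambda>j. if j < s then lam (n k + j) / \<Lambda> else 1) N (- lam (n k) * ln t)"
      unfolding exp_sum_def sum.inter_restrict[OF finite_lessThan]
      using that \<open>0 < \<Lambda>\<close> by (intro sum.cong) (auto simp: powr_def \<Lambda>_def)
    finally show ?thesis .
  qed
qed

lemma quasi_lacunary_block_as_exp_sum:
  assumes lam: "strict_mono lam" "\<And>j. 0 < lam j" and ql: "quasi_lacunary lam q N n"
  obtains a \<mu> where "\<forall>j<N. 1 \<le> \<mu> j \<and> \<mu> j \<le> q ^ (2 * N)"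
    and "\<And>t. 0 < t \<Longrightarrow> block_fun lam n k c t = exp_sum a \<mu> N (- lam (n k) * ln t)"
    and "\<forall>u\<ge>0. \<bar>exp_sum a \<mu> N u\<bar> \<le> sup_norm01 (block_fun lam n k c)"
proof -
  have Q: "1 \<le> q ^ (2 * N)" and size: "n (Suc k) - n k \<le> N"
    using ql by (simp_all add: quasi_lacunary_def one_le_power)
  obtain \<mu> a where \<mu>: "\<forall>j<N. 1 \<le> \<mu> j \<and> \<mu> j \<le> q ^ (2 * N)"
    and repr: "\<And>t. 0 < t \<Longrightarrow> block_fun lam n k c t = exp_sum a \<mu> N (- lam (n k) * ln t)"
    by (rule block_fun_eq_exp_sum[where c = c, OF lam size quasi_lacunary_block_ratio_le[OF ql lam(2)[of "n k"]] Q]) iprover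
  moreover have "\<forall>u\<ge>0. \<bar>exp_sum a \<mu> N u\<bar> \<le> sup_norm01 (block_fun lam n k c)"
  proof (intro allI impI)
    fix u :: real assume "0 \<le> u"
    have "exp (- u / lam (n k)) \<in> {0..1}" using \<open>0 \<le> u\<close> lam(2)[of "n k"] by simp
    then have "\<bar>block_fun lam n k c (exp (- u / lam (n k)))\<bar> \<le> sup_norm01 (block_fun lam n k c)"
      by (rule abs_block_fun_le_sup_norm01[OF lam(2)])
    moreover have "exp_sum a \<mu> N u = block_fun lam n k c (exp (- u / lam (n k)))"
      using repr[of "exp (- u / lam (n k))"] lam(2)[of "n k"] by simp
    ultimately show "\<bar>exp_sum a \<mu> N u\<bar> \<le> sup_norm01 (block_fun lam n k c)" by simp
  qed
  ultimately show ?thesis by (rule that)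
qed


lemma block_fun_decay:
  assumes lam: "strict_mono lam" "\<And>j. 0 < lam j" and ql: "quasi_lacunary lam q N n"
  shows "\<exists>K\<ge>0. \<forall>k c t. t \<in> {0..1} \<longrightarrow>
           \<bar>block_fun lam n k c t\<bar> \<le> K * sup_norm01 (block_fun lam n k c) * t powr (lam (n k) / 2)"
proof -
  have "1 \<le> q ^ (2 * N)" using ql by (simp add: quasi_lacunary_def one_le_power)
  then obtain K where "K \<ge> 0" and decay: "\<And>a \<mu> B. \<forall>j<N. 1 \<le> \<mu> j \<and> \<mu> j \<le> q ^ (2 * N) \<Longrightarrow>
      \<forall>u\<ge>0. \<bar>exp_sum a \<mu> N u\<bar> \<le> B \<Longrightarrow> \<forall>u\<ge>0. \<bar>exp_sum a \<mu> N u\<bar> \<le> K * B * exp (- u / 2)"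
    using exp_sum_decay by blast
  have "\<bar>block_fun lam n k c t\<bar> \<le> K * sup_norm01 (block_fun lam n k c) * t powr (lam (n k) / 2)"
    if t: "t \<in> {0..1}" for k c t
  proof (cases "t = 0")
    case True
    then show ?thesis by (simp add: block_fun_at_0)
  next
    case False
    then have "0 < t" using t by simp
    obtain \<mu> a where \<mu>: "\<forall>j<N. 1 \<le> \<mu> j \<and> \<mu> j \<le> q ^ (2 * N)"
      and repr: "\<And>s. 0 < s \<Longrightarrow> block_fun lam n k c s = exp_sum a \<mu> N (- lam (n k) * ln s)"
      and E: "\<forall>u\<ge>0. \<bar>exp_sum a \<mu> N u\<bar> \<le> sup_norm01 (block_fun lam n k c)"
      by (rule quasi_lacunary_block_as_exp_sum[OF lam ql, where k = k and c = c]) iprover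
    have "0 \<le> - lam (n k) * ln t" using t \<open>0 < t\<close> lam(2)[of "n k"] by (simp add: mult_nonneg_nonpos)
    then have "\<bar>exp_sum a \<mu> N (- lam (n k) * ln t)\<bar>
        \<le> K * sup_norm01 (block_fun lam n k c) * exp (- (- lam (n k) * ln t) / 2)"
      by (rule decay[OF \<mu> E, rule_format])
    also have "exp (- (- lam (n k) * ln t) / 2) = t powr (lam (n k) / 2)"
      using \<open>0 < t\<close> by (simp add: powr_def)
    finally show ?thesis using repr[OF \<open>0 < t\<close>] by simp
  qed
  then show ?thesis using \<open>K \<ge> 0\<close> by blast
qed

lemma block_fun_deriv_decay:
  assumes lam: "strict_mono lam" "\<And>j. 0 < lam j" and ql: "quasi_lacunary lam q N n"
  shows "\<exists>K\<ge>0. \<forall>k c d t. 0 < t \<longrightarrow> t \<le> 1 \<longrightarrow> (block_fun lam n k c has_real_derivative d) (at t) \<longrightarrow>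
           \<bar>d\<bar> \<le> lam (n k) * K * sup_norm01 (block_fun lam n k c) * t powr (lam (n k) / 2 - 1)"
proof -
  have "1 \<le> q ^ (2 * N)" using ql by (simp add: quasi_lacunary_def one_le_power)
  then obtain K where "K \<ge> 0" and decay: "\<And>a \<mu> B. \<forall>j<N. 1 \<le> \<mu> j \<and> \<mu> j \<le> q ^ (2 * N) \<Longrightarrow>
      \<forall>u\<ge>0. \<bar>exp_sum a \<mu> N u\<bar> \<le> B \<Longrightarrow>
      \<forall>u\<ge>0. \<bar>exp_sum (\<lambda>j. - a j * \<mu> j) \<mu> N u\<bar> \<le> K * B * exp (- u / 2)"
    using exp_sum_deriv_decay by blast
  have "\<bar>d\<bar> \<le> lam (n k) * K * sup_norm01 (block_fun lam n k c) * t powr (lam (n k) / 2 - 1)"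
    if t: "0 < t" "t \<le> 1" and d: "(block_fun lam n k c has_real_derivative d) (at t)" for k c d t
  proof -
    define \<Lambda> where "\<Lambda> = lam (n k)"
    have "0 < \<Lambda>" using lam by (simp add: \<Lambda>_def)
    obtain \<mu> a where \<mu>: "\<forall>j<N. 1 \<le> \<mu> j \<and> \<mu> j \<le> q ^ (2 * N)"
      and repr: "\<And>s. 0 < s \<Longrightarrow> block_fun lam n k c s = exp_sum a \<mu> N (- \<Lambda> * ln s)"
      and E: "\<forall>u\<ge>0. \<bar>exp_sum a \<mu> N u\<bar> \<le> sup_norm01 (block_fun lam n k c)"
      unfolding \<Lambda>_def by (rule quasi_lacunary_block_as_exp_sum[OF lam ql, where k = k and c = c]) iprover
    define E' where "E' = exp_sum (\<lambda>j. - a j * \<mu> j) \<mu> N"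
    have "((\<lambda>s. - \<Lambda> * ln s) has_real_derivative - \<Lambda> / t) (at t)"
      using t by (auto intro!: derivative_eq_intros)
    from DERIV_chain2[OF has_real_derivative_exp_sum this]
    have "((\<lambda>s. exp_sum a \<mu> N (- \<Lambda> * ln s)) has_real_derivative E' (- \<Lambda> * ln t) * (- \<Lambda> / t)) (at t)"
      unfolding E'_def .
    then have "(block_fun lam n k c has_real_derivative E' (- \<Lambda> * ln t) * (- \<Lambda> / t)) (at t)"
      by (rule has_field_derivative_transform_within_open[of _ _ _ "{0<..}"]) (simp_all add: t repr)
    then have "\<bar>d\<bar> = \<Lambda> / t * \<bar>E' (- \<Lambda> * ln t)\<bar>"
      using DERIV_unique[OF d] t \<open>0 < \<Lambda>\<close> by (simp add: abs_mult)
    also have "\<dots> \<le> \<Lambda> / t * (K * sup_norm01 (block_fun lam n k c) * exp (- (- \<Lambda> * ln t) / 2))"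
    proof (intro mult_left_mono)
      have "0 \<le> - \<Lambda> * ln t" using t \<open>0 < \<Lambda>\<close> by (simp add: mult_nonneg_nonpos)
      then show "\<bar>E' (- \<Lambda> * ln t)\<bar> \<le> K * sup_norm01 (block_fun lam n k c) * exp (- (- \<Lambda> * ln t) / 2)"
        unfolding E'_def by (rule decay[OF \<mu> E, rule_format])
    qed (use t \<open>0 < \<Lambda>\<close> in simp)
    also have "exp (- (- \<Lambda> * ln t) / 2) = t powr (1 + (\<Lambda> / 2 - 1))"
      using t by (simp add: powr_def)
    also have "\<dots> = t * t powr (\<Lambda> / 2 - 1)"
      using t by (simp only: powr_add powr_one)
    also have "\<Lambda> / t * (K * sup_norm01 (block_fun lam n k c) * (t * t powr (\<Lambda> / 2 - 1)))
        = \<Lambda> * K * sup_norm01 (block_fun lam n k c) * t powr (\<Lambda> / 2 - 1)"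
      using t by simp
    finally show ?thesis by (simp add: \<Lambda>_def)
  qed
  then show ?thesis using \<open>K \<ge> 0\<close> by blast
qed

lemma block_max_point_bound:
  assumes lam: "strict_mono lam" "\<And>j. 0 < lam j" and ql: "quasi_lacunary lam q N n"
  shows "\<exists>A\<ge>0. \<forall>k c x0. (\<exists>t\<in>{0..1}. block_fun lam n k c t \<noteq> 0) \<longrightarrow> x0 \<in> {0..1} \<longrightarrow>
           \<bar>block_fun lam n k c x0\<bar> = sup_norm01 (block_fun lam n k c) \<longrightarrow> 1 - x0 \<le> A / lam (n k)"
proof -
  obtain K where decay: "\<And>k c t. t \<in> {0..1} \<Longrightarrow>
      \<bar>block_fun lam n k c t\<bar> \<le> K * sup_norm01 (block_fun lam n k c) * t powr (lam (n k) / 2)"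
    using block_fun_decay[OF lam ql] by blast
  define A where "A = 2 * ln (max K 1)"
  have "1 - x0 \<le> A / lam (n k)"
    if nz: "\<exists>t\<in>{0..1}. block_fun lam n k c t \<noteq> 0" and x0: "x0 \<in> {0..1}"
      and max: "\<bar>block_fun lam n k c x0\<bar> = sup_norm01 (block_fun lam n k c)" for k c x0
  proof -
    define M where "M = sup_norm01 (block_fun lam n k c)"
    have "0 < M" unfolding M_def by (rule sup_norm01_block_fun_pos[OF lam(2) nz])
    have "0 < x0" using x0 max \<open>0 < M\<close> by (cases "x0 = 0") (auto simp: block_fun_at_0 M_def)
    have "M * 1 \<le> M * (K * x0 powr (lam (n k) / 2))"
      using decay[OF x0, of k c] by (simp add: M_def max algebra_simps)
    then have "1 \<le> K * x0 powr (lam (n k) / 2)"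
      using \<open>0 < M\<close> by (simp only: mult_le_cancel_left_pos)
    also have "\<dots> \<le> max K 1 * x0 powr (lam (n k) / 2)"
      by (intro mult_right_mono) auto
    finally have "0 \<le> ln (max K 1 * x0 powr (lam (n k) / 2))"
      by (rule ln_ge_zero)
    also have "\<dots> = ln (max K 1) + lam (n k) / 2 * ln x0"
      using \<open>0 < x0\<close> by (simp add: ln_mult ln_powr)
    finally have "- ln x0 \<le> A / lam (n k)"
      using lam(2)[of "n k"] by (simp add: A_def field_simps)
    moreover have "1 - x0 \<le> - ln x0" using ln_le_minus_one[OF \<open>0 < x0\<close>] by simp
    ultimately show ?thesis by linarith
  qed
  moreover have "0 \<le> A" by (simp add: A_def)
  ultimately show ?thesis by blast
qed

lemma large_block_deriv_bound:
  assumes lam: "strict_mono lam" "\<And>j. 0 < lam j" and ql: "quasi_lacunary lam q N n"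
  shows "\<exists>K\<ge>0. \<forall>k c f' t. 2 \<le> lam (n k) \<longrightarrow>
           (\<forall>t\<in>{0..1}. (block_fun lam n k c has_real_derivative f' t) (at t within {0..1})) \<longrightarrow>
           t \<in> {0..1} \<longrightarrow> \<bar>f' t\<bar> \<le> lam (n k) * K * sup_norm01 (block_fun lam n k c)"
proof -
  obtain K where "K \<ge> 0" and decay: "\<And>k c d t. 0 < t \<Longrightarrow> t \<le> 1 \<Longrightarrow>
      (block_fun lam n k c has_real_derivative d) (at t) \<Longrightarrow>
      \<bar>d\<bar> \<le> lam (n k) * K * sup_norm01 (block_fun lam n k c) * t powr (lam (n k) / 2 - 1)"
    using block_fun_deriv_decay[OF lam ql] by blast
  have "\<bar>f' t\<bar> \<le> lam (n k) * K * sup_norm01 (block_fun lam n k c)"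
    if large: "2 \<le> lam (n k)"
      and f': "\<forall>t\<in>{0..1}. (block_fun lam n k c has_real_derivative f' t) (at t within {0..1})"
      and t: "t \<in> {0..1}" for k c f' t
  proof (rule abs_deriv_le_of_interior_bound[OF f' _ t])
    fix s :: real assume s: "0 < s" "s < 1"
    then have "(block_fun lam n k c has_real_derivative f' s) (at s)"
      using f'[rule_format, of s] by (simp add: at_within_Icc_at)
    then have "\<bar>f' s\<bar> \<le> lam (n k) * K * sup_norm01 (block_fun lam n k c) * s powr (lam (n k) / 2 - 1)"
      using decay s by simp
    also have "\<dots> \<le> lam (n k) * K * sup_norm01 (block_fun lam n k c)"
    proof (rule mult_left_le)
      show "s powr (lam (n k) / 2 - 1) \<le> 1" using s large by (intro powr_le1) auto
      have "0 \<le> sup_norm01 (block_fun lam n k c)"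
        using abs_block_fun_le_sup_norm01[where lam = lam and t = 0 and n = n and k = k and c = c] lam(2)
        by force
      then show "0 \<le> lam (n k) * K * sup_norm01 (block_fun lam n k c)"
        using lam(2)[of "n k"] \<open>K \<ge> 0\<close> by simp
    qed
    finally show "\<bar>f' s\<bar> \<le> lam (n k) * K * sup_norm01 (block_fun lam n k c)" .
  qed
  then show ?thesis using \<open>K \<ge> 0\<close> by blast
qed

lemma block_fun_eq_power_sum:
  assumes "n (Suc k) \<le> p"
  shows "block_fun lam n k c = (\<lambda>t. \<Sum>j<p. (if j \<in> {n k..<n (Suc k)} then c j else 0) * t powr lam j)"
proof
  fix t
  have "(\<Sum>j<p. (if j \<in> {n k..<n (Suc k)} then c j else 0) * t powr lam j)
      = (\<Sum>j\<in>{..<p} \<inter> {n k..<n (Suc k)}. c j * t powr lam j)"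
    by (simp add: sum.inter_restrict if_distrib[of "\<lambda>x. x * _"] cong: if_cong)
  also have "{..<p} \<inter> {n k..<n (Suc k)} = {n k..<n (Suc k)}" using assms by auto
  finally show "block_fun lam n k c t = (\<Sum>j<p. (if j \<in> {n k..<n (Suc k)} then c j else 0) * t powr lam j)"
    by (simp add: block_fun_def)
qed

lemma small_block_deriv_bound:
  assumes lam: "strict_mono lam" "\<And>j. 0 < lam j"
  shows "\<exists>C>0. \<forall>k c f' t. n (Suc k) \<le> p \<longrightarrow>
           (\<forall>t\<in>{0..1}. (block_fun lam n k c has_real_derivative f' t) (at t within {0..1})) \<longrightarrow>
           t \<in> {0..1} \<longrightarrow> \<bar>f' t\<bar> \<le> C * sup_norm01 (block_fun lam n k c)"
proof -
  have "inj_on lam {..<p}" using lam(1) by (simp add: strict_mono_imp_inj_on)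
  then obtain K where "K \<ge> 0" and coeff: "\<forall>c B j. (\<forall>u\<in>{0..1}. \<bar>exp_sum c lam p u\<bar> \<le> B) \<longrightarrow>
      j < p \<longrightarrow> \<bar>c j\<bar> \<le> K * B"
    using exp_sum_coeff_bound by blast
  define C where "C = 1 + K * (\<Sum>j<p. lam j)"
  have "0 < C" using \<open>K \<ge> 0\<close> lam(2) by (simp add: C_def add_pos_nonneg sum_nonneg less_imp_le)
  have "\<bar>f' t\<bar> \<le> C * sup_norm01 (block_fun lam n k c)"
    if p: "n (Suc k) \<le> p"
      and f': "\<forall>t\<in>{0..1}. (block_fun lam n k c has_real_derivative f' t) (at t within {0..1})"
      and t: "t \<in> {0..1}" for k c f' t
  proof (rule abs_deriv_le_of_interior_bound[OF f' _ t])
    define a where "a j = (if j \<in> {n k..<n (Suc k)} then c j else 0)" for j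
    define M where "M = sup_norm01 (block_fun lam n k c)"
    have g: "block_fun lam n k c = (\<lambda>t. \<Sum>j<p. a j * t powr lam j)"
      unfolding a_def by (rule block_fun_eq_power_sum[where n = n and k = k, OF p])
    have M: "\<bar>block_fun lam n k c s\<bar> \<le> M" if "s \<in> {0..1}" for s
      unfolding M_def using abs_block_fun_le_sup_norm01 lam(2) that by blast
    have "\<bar>exp_sum a lam p u\<bar> \<le> M" if "u \<in> {0..1}" for u
    proof -
      have "exp_sum a lam p u = block_fun lam n k c (exp (- u))"
        unfolding g exp_sum_def by (intro sum.cong) (auto simp: powr_def)
      then show ?thesis using M[of "exp (- u)"] that by simp
    qed
    then have a_bound: "\<bar>a j\<bar> \<le> K * M" if "j < p" for j
      using coeff that by blast
    have a_vanish: "a j = 0" if "j < p" "lam j < 1" for j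
      using f'[rule_format, of 0] that unfolding g
      by (intro power_sum_coeff_eq_0_if_differentiable[OF lam(1)]) auto
    fix s :: real assume s: "0 < s" "s < 1"
    have "(block_fun lam n k c has_real_derivative (\<Sum>j<p. a j * (lam j * s powr (lam j - 1)))) (at s)"
      unfolding g using s by (auto intro!: derivative_eq_intros sum.cong)
    moreover have "(block_fun lam n k c has_real_derivative f' s) (at s)"
      using f'[rule_format, of s] s by (simp add: at_within_Icc_at)
    ultimately have "f' s = (\<Sum>j<p. a j * (lam j * s powr (lam j - 1)))"
      by (rule DERIV_unique[rotated])
    also have "\<bar>\<dots>\<bar> \<le> K * M * (\<Sum>j<p. lam j)"
      using a_bound a_vanish s by (intro power_sum_deriv_bound lam(2)) auto
    also have "\<dots> \<le> C * M"
      using \<open>K \<ge> 0\<close> M[of 0] by (simp add: C_def algebra_simps)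
    finally show "\<bar>f' s\<bar> \<le> C * sup_norm01 (block_fun lam n k c)" by (simp add: M_def)
  qed
  with \<open>0 < C\<close> show ?thesis by blast
qed

lemma block_sup_norm01_deriv_bounds:
  assumes lam: "\<And>j. 0 < lam j"
    and f': "\<forall>t\<in>{0..1}. (block_fun lam n k c has_real_derivative f' t) (at t within {0..1})"
    and nz: "\<exists>t\<in>{0..1}. block_fun lam n k c t \<noteq> 0"
    and bound: "\<And>t. t \<in> {0..1} \<Longrightarrow> \<bar>f' t\<bar> \<le> \<beta> * sup_norm01 (block_fun lam n k c)"
  shows "0 < sup_norm01 (block_fun lam n k c)" "sup_norm01 (block_fun lam n k c) \<le> sup_norm01 f'"
    "sup_norm01 f' \<le> \<beta> * sup_norm01 (block_fun lam n k c)"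
  using sup_norm01_block_fun_pos[OF lam nz] sup_norm01_le[OF bound]
    sup_norm01_le_sup_norm01_deriv[OF block_fun_at_0 f' bound] by auto

lemma large_block_max_point_bound:
  assumes lam: "strict_mono lam" "\<And>j. 0 < lam j" and ql: "quasi_lacunary lam q N n"
  shows "\<exists>A>0. \<forall>k c f' x0. 2 \<le> lam (n k) \<longrightarrow>
           (\<forall>t\<in>{0..1}. (block_fun lam n k c has_real_derivative f' t) (at t within {0..1})) \<longrightarrow>
           (\<exists>t\<in>{0..1}. block_fun lam n k c t \<noteq> 0) \<longrightarrow> x0 \<in> {0..1} \<longrightarrow>
           \<bar>block_fun lam n k c x0\<bar> = sup_norm01 (block_fun lam n k c) \<longrightarrow>
           1 - x0 \<le> A * (sup_norm01 (block_fun lam n k c) / sup_norm01 f')"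
proof -
  obtain A0 where "A0 \<ge> 0" and max_point: "\<forall>k c x0. (\<exists>t\<in>{0..1}. block_fun lam n k c t \<noteq> 0) \<longrightarrow>
      x0 \<in> {0..1} \<longrightarrow> \<bar>block_fun lam n k c x0\<bar> = sup_norm01 (block_fun lam n k c) \<longrightarrow>
      1 - x0 \<le> A0 / lam (n k)"
    using block_max_point_bound[OF lam ql] by blast
  obtain K where "K \<ge> 0" and large: "\<forall>k c f' t. 2 \<le> lam (n k) \<longrightarrow>
      (\<forall>t\<in>{0..1}. (block_fun lam n k c has_real_derivative f' t) (at t within {0..1})) \<longrightarrow>
      t \<in> {0..1} \<longrightarrow> \<bar>f' t\<bar> \<le> lam (n k) * K * sup_norm01 (block_fun lam n k c)"
    using large_block_deriv_bound[OF lam ql] by blast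
  define A where "A = A0 * K + 1"
  have "A > 0" using mult_nonneg_nonneg[OF \<open>A0 \<ge> 0\<close> \<open>K \<ge> 0\<close>] by (simp add: A_def)
  moreover have "1 - x0 \<le> A * (sup_norm01 (block_fun lam n k c) / sup_norm01 f')"
    if "2 \<le> lam (n k)"
      and f': "\<forall>t\<in>{0..1}. (block_fun lam n k c has_real_derivative f' t) (at t within {0..1})"
      and nz: "\<exists>t\<in>{0..1}. block_fun lam n k c t \<noteq> 0" and x0: "x0 \<in> {0..1}"
      and max: "\<bar>block_fun lam n k c x0\<bar> = sup_norm01 (block_fun lam n k c)" for k c f' x0
  proof -
    define M D where "M = sup_norm01 (block_fun lam n k c)" and "D = sup_norm01 f'"
    have "0 < M" "M \<le> D" "D \<le> lam (n k) * K * M"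
      using block_sup_norm01_deriv_bounds[OF lam(2) f' nz, of "lam (n k) * K"] large that
      unfolding M_def D_def by auto
    have "1 - x0 \<le> A0 / lam (n k)" using max_point nz x0 max by blast
    also have "\<dots> \<le> A0 * K * (M / D)"
      using \<open>0 < M\<close> \<open>M \<le> D\<close> \<open>D \<le> lam (n k) * K * M\<close> lam(2)[of "n k"] \<open>A0 \<ge> 0\<close>
      by (auto simp: field_simps mult_left_mono)
    also have "\<dots> \<le> A * (M / D)"
      using \<open>0 < M\<close> \<open>M \<le> D\<close> by (intro mult_right_mono) (auto simp: A_def)
    finally show ?thesis by (simp add: M_def D_def)
  qed
  ultimately show ?thesis by blast
qed

lemma small_block_norm_ratio_bound:
  assumes lam: "strict_mono lam" "\<And>j. 0 < lam j" and ql: "quasi_lacunary lam q N n"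
  shows "\<exists>C>0. \<forall>k c f'. lam (n k) < 2 \<longrightarrow>
           (\<forall>t\<in>{0..1}. (block_fun lam n k c has_real_derivative f' t) (at t within {0..1})) \<longrightarrow>
           (\<exists>t\<in>{0..1}. block_fun lam n k c t \<noteq> 0) \<longrightarrow>
           1 \<le> C * (sup_norm01 (block_fun lam n k c) / sup_norm01 f')"
proof -
  obtain k0 where k0: "\<And>k. k0 \<le> k \<Longrightarrow> 2 \<le> lam (n k)"
    using quasi_lacunary_eventually_ge[OF ql lam(2)] by blast
  obtain C where "C > 0" and small: "\<forall>k c f' t. n (Suc k) \<le> n k0 \<longrightarrow>
      (\<forall>t\<in>{0..1}. (block_fun lam n k c has_real_derivative f' t) (at t within {0..1})) \<longrightarrow>
      t \<in> {0..1} \<longrightarrow> \<bar>f' t\<bar> \<le> C * sup_norm01 (block_fun lam n k c)"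
    using small_block_deriv_bound[OF lam] by blast
  have "1 \<le> C * (sup_norm01 (block_fun lam n k c) / sup_norm01 f')"
    if "lam (n k) < 2"
      and f': "\<forall>t\<in>{0..1}. (block_fun lam n k c has_real_derivative f' t) (at t within {0..1})"
      and nz: "\<exists>t\<in>{0..1}. block_fun lam n k c t \<noteq> 0" for k c f'
  proof -
    have "\<not> k0 \<le> k" using k0 that(1) by force
    then have "n (Suc k) \<le> n k0" using ql by (simp add: quasi_lacunary_def strict_mono_less_eq)
    then have "0 < sup_norm01 (block_fun lam n k c)"
      "sup_norm01 (block_fun lam n k c) \<le> sup_norm01 f'"
      "sup_norm01 f' \<le> C * sup_norm01 (block_fun lam n k c)"
      using block_sup_norm01_deriv_bounds[OF lam(2) f' nz, of C] small f' by auto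
    then show ?thesis by (simp add: field_simps)
  qed
  with \<open>C > 0\<close> show ?thesis by blast
qed

theorem corollary2p2:
  fixes lam :: "nat \<Rightarrow> real" and q :: real and N :: nat and n :: "nat \<Rightarrow> nat"
  assumes "muntz_seq lam"
    and "quasi_lacunary lam q N n"
  shows "\<exists>A>0. \<exists>\<eta>>0. \<forall>k c f'.
           (\<forall>t\<in>{0..1}. (block_fun lam n k c has_real_derivative f' t) (at t within {0..1})) \<longrightarrow>
           (\<exists>t\<in>{0..1}. block_fun lam n k c t \<noteq> 0) \<longrightarrow>
           A * (sup_norm01 (block_fun lam n k c) / sup_norm01 f') \<le> \<eta> \<longrightarrow>
           (\<forall>x0\<in>{0..1}. \<bar>block_fun lam n k c x0\<bar> = sup_norm01 (block_fun lam n k c) \<longrightarrow>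
              1 - A * (sup_norm01 (block_fun lam n k c) / sup_norm01 f') \<le> x0 \<and> x0 \<le> 1)"
proof -
  have lam: "strict_mono lam" "\<And>j. 0 < lam j" using assms(1) by (auto simp: muntz_seq_def)
  obtain A where "A > 0" and large: "\<forall>k c f' x0. 2 \<le> lam (n k) \<longrightarrow>
      (\<forall>t\<in>{0..1}. (block_fun lam n k c has_real_derivative f' t) (at t within {0..1})) \<longrightarrow>
      (\<exists>t\<in>{0..1}. block_fun lam n k c t \<noteq> 0) \<longrightarrow> x0 \<in> {0..1} \<longrightarrow>
      \<bar>block_fun lam n k c x0\<bar> = sup_norm01 (block_fun lam n k c) \<longrightarrow>
      1 - x0 \<le> A * (sup_norm01 (block_fun lam n k c) / sup_norm01 f')"
    using large_block_max_point_bound[OF lam assms(2)] by blast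
  obtain C where "C > 0" and small: "\<forall>k c f'. lam (n k) < 2 \<longrightarrow>
      (\<forall>t\<in>{0..1}. (block_fun lam n k c has_real_derivative f' t) (at t within {0..1})) \<longrightarrow>
      (\<exists>t\<in>{0..1}. block_fun lam n k c t \<noteq> 0) \<longrightarrow>
      1 \<le> C * (sup_norm01 (block_fun lam n k c) / sup_norm01 f')"
    using small_block_norm_ratio_bound[OF lam assms(2)] by blast
  have "1 - A * (sup_norm01 (block_fun lam n k c) / sup_norm01 f') \<le> x0"
    if f': "\<forall>t\<in>{0..1}. (block_fun lam n k c has_real_derivative f' t) (at t within {0..1})"
      and nz: "\<exists>t\<in>{0..1}. block_fun lam n k c t \<noteq> 0"
      and close: "A * (sup_norm01 (block_fun lam n k c) / sup_norm01 f') \<le> A / (2 * C)"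
      and x0: "x0 \<in> {0..1}" and max: "\<bar>block_fun lam n k c x0\<bar> = sup_norm01 (block_fun lam n k c)"
    for k c f' x0
  proof (cases "2 \<le> lam (n k)")
    case True
    then have "1 - x0 \<le> A * (sup_norm01 (block_fun lam n k c) / sup_norm01 f')"
      using large f' nz x0 max by blast
    then show ?thesis by simp
  next
    case False
    define \<rho> where "\<rho> = sup_norm01 (block_fun lam n k c) / sup_norm01 f'"
    have "1 \<le> C * \<rho>" using small False f' nz by (auto simp: \<rho>_def)
    then have "A * 1 \<le> A * (C * \<rho>)" using \<open>A > 0\<close> by (intro mult_left_mono) auto
    also have "\<dots> = C * (A * \<rho>)" by (simp only: ac_simps)
    also have "\<dots> \<le> C * (A / (2 * C))" using close \<open>C > 0\<close> by (intro mult_left_mono) (auto simp: \<rho>_def)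
    finally show ?thesis using \<open>A > 0\<close> \<open>C > 0\<close> by simp
  qed
  then show ?thesis
    using \<open>A > 0\<close> \<open>C > 0\<close>
    by (intro exI[of _ A] exI[of _ "A / (2 * C)"] conjI allI impI ballI) auto
qed

end
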